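(* Let $0<q<1$, let $k,n$ be nonnegative integers and let $x\in[0,1]$. Then $$B_{k,n}(x,q)=\sum_{i=k}^{n}\binom{i}{k}\binom{n}{i}(-1)^{i-k}q^{(1-x)(i-k)}[x]_q^{i},$$ where an empty sum (when $k>n$) is $0$.
   Context: Let $q$ be a real number with $0<q<1$. For real $x$, the $q$-number is $[x]_q=\frac{1-q^x}{1-q}$. For a nonnegative integer $k$ and $x\in[0,1]$, the modified $q$-Bernstein polynomials $B_{k,n}(x,q)$, $n=0,1,2,\dots$, are defined by the generating function $$\frac{t^k e^{[1-x]_q t}[x]_q^k}{k!}=\sum_{n=0}^\infty B_{k,n}(x,q)\frac{t^n}{n!}.$$ *)

theory Defs
  imports "HOL-Computational_Algebra.Formal_Power_Series"
begin

definition q_num :: "real \<Rightarrow> real \<Rightarrow> real" where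
  "q_num q x = (1 - q powr x) / (1 - q)"

definition qB_gen :: "nat \<Rightarrow> real \<Rightarrow> real \<Rightarrow> real fps" where
  "qB_gen k x q = fps_const (q_num q x ^ k / fact k) * fps_X ^ k * fps_exp (q_num q (1 - x))"

definition qBernstein :: "nat \<Rightarrow> nat \<Rightarrow> real \<Rightarrow> real \<Rightarrow> real" where
  "qBernstein k n x q = fact n * fps_nth (qB_gen k x q) n"

end

theory Submission
  imports Defs
begin

text \<open>Reading off the n-th coefficient of the generating function gives the closed form
  B_{k,n}(x,q) = (n choose k) [x]_q^k [1-x]_q^(n-k). Since [1-x]_q = 1 - q^(1-x) [x]_q, the second
  factor is a power of 1 - r b with b = [x]_q and r = q^(1-x); expanding it by the binomial theorem
  and using (n choose i)(i choose k) = (n choose k)(n-k choose i-k) gives the stated sum.\<close>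

lemma qBernstein_eq_0:
  assumes "n < k"
  shows "qBernstein k n x q = 0"
  using assms unfolding qBernstein_def qB_gen_def
  by (simp add: mult.assoc fps_X_power_mult_nth)

lemma qBernstein_closed_form:
  assumes "k \<le> n"
  shows "qBernstein k n x q = real (n choose k) * q_num q x ^ k * q_num q (1 - x) ^ (n - k)"
proof -
  have "qBernstein k n x q
      = fact n * (q_num q x ^ k / fact k) * (q_num q (1 - x) ^ (n - k) / fact (n - k))"
    using assms unfolding qBernstein_def qB_gen_def
    by (simp add: mult.assoc fps_X_power_mult_nth)
  also have "\<dots> = real (n choose k) * q_num q x ^ k * q_num q (1 - x) ^ (n - k)"
    using binomial_fact[OF assms, where 'a=real] by (simp add: field_simps)
  finally show ?thesis .
qed

lemma q_num_one_minus:
  assumes "0 < q" "q \<noteq> 1"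
  shows "q_num q (1 - x) = 1 - q powr (1 - x) * q_num q x"
  using assms unfolding q_num_def
  by (simp add: field_simps powr_add[symmetric])

lemma binomial_times_power_expansion:
  fixes b r :: "'a::comm_ring_1"
  assumes "k \<le> n"
  shows "of_nat (n choose k) * b ^ k * (1 - r * b) ^ (n - k)
    = (\<Sum>i=k..n. of_nat (i choose k) * of_nat (n choose i) * (-1) ^ (i - k) * r ^ (i - k) * b ^ i)"
proof -
  have choose: "of_nat (n choose k) * of_nat (n - k choose j)
      = (of_nat (k + j choose k) * of_nat (n choose (k + j)) :: 'a)" if "j \<le> n - k" for j
    using choose_mult[of k "k + j" n] that assms
    by (simp flip: of_nat_mult add: mult.commute)
  have "of_nat (n choose k) * b ^ k * (1 - r * b) ^ (n - k)
      = of_nat (n choose k) * b ^ k * (\<Sum>j\<le>n - k. of_nat (n - k choose j) * (- (r * b)) ^ j)"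
    using binomial_ring[of "- (r * b)" 1 "n - k"] by simp
  also have "\<dots> = (\<Sum>j=0..n - k. of_nat (k + j choose k) * of_nat (n choose (k + j))
                     * (-1) ^ j * r ^ j * b ^ (k + j))"
    unfolding sum_distrib_left atMost_atLeast0
  proof (intro sum.cong refl)
    fix j assume "j \<in> {0..n - k}"
    have "of_nat (n choose k) * b ^ k * (of_nat (n - k choose j) * (- (r * b)) ^ j)
        = (of_nat (n choose k) * of_nat (n - k choose j)) * ((-1) ^ j * r ^ j * b ^ (k + j))"
      by (simp add: power_minus' power_add power_mult_distrib mult_ac)
    also have "\<dots> = of_nat (k + j choose k) * of_nat (n choose (k + j))
        * ((-1) ^ j * r ^ j * b ^ (k + j))"
      using \<open>j \<in> {0..n - k}\<close> by (simp only: choose atLeastAtMost_iff)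
    finally show "of_nat (n choose k) * b ^ k * (of_nat (n - k choose j) * (- (r * b)) ^ j)
        = of_nat (k + j choose k) * of_nat (n choose (k + j)) * (-1) ^ j * r ^ j * b ^ (k + j)"
      by (simp only: mult.assoc)
  qed
  also have "\<dots> = (\<Sum>i=k..n. of_nat (i choose k) * of_nat (n choose i)
                     * (-1) ^ (i - k) * r ^ (i - k) * b ^ i)"
    using sum.shift_bounds_cl_nat_ivl[of "\<lambda>i. of_nat (i choose k) * of_nat (n choose i)
        * (-1) ^ (i - k) * r ^ (i - k) * b ^ i" 0 k "n - k"] assms
    by (simp add: add.commute)
  finally show ?thesis .
qed

theorem theorem6:
  fixes q x :: real and k n :: nat
  assumes "0 < q" "q < 1" "0 \<le> x" "x \<le> 1"
  shows "qBernstein k n x q =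
    (\<Sum>i=k..n. real (i choose k) * real (n choose i) * (-1) ^ (i - k)
       * q powr ((1 - x) * real (i - k)) * q_num q x ^ i)"
proof (cases "k \<le> n")
  case False
  then show ?thesis using qBernstein_eq_0 by simp
next
  case True
  have powr_mult_nat: "q powr ((1 - x) * real j) = (q powr (1 - x)) ^ j" for j
    using \<open>0 < q\<close> by (simp add: powr_realpow[symmetric] powr_powr)
  have "q \<noteq> 1" using \<open>q < 1\<close> by simp
  show ?thesis
    unfolding qBernstein_closed_form[OF True] q_num_one_minus[OF \<open>0 < q\<close> \<open>q \<noteq> 1\<close>]
      powr_mult_nat
    by (rule binomial_times_power_expansion[OF True])
qed

end
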